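(* Let $Z$ be a continuous random variable with CDF $F$ and density $f$ bounded by $L$, whose support is contained in $[0,1]$ with $\sup\{z : F(z)=0\} = 0$ and $\inf\{z : F(z)=1\} = 1$; define $F^{-1}(y) = \inf\{z : F(z) = y\}$. Let $\eta>0$ and run GBPA with the stochastically smoothed potential $\tilde\Phi$ whose perturbation is $\eta Z$. Then for every gain sequence $g_1,\dots,g_T\in[-1,0]^N$, every round $t$, and every $\epsilon\in(0,1)$, $$\mathbb{E}\big[D_{\tilde\Phi}(\hat G_t,\hat G_{t-1}) \,\big|\, i_1,\dots,i_{t-1}\big] \le NL\Big(\frac{1}{2\eta\epsilon} + 1 - F^{-1}(1-\epsilon)\Big).$$
   Context: Adversarial multi-armed bandit: $N$ arms, $T$ rounds; an oblivious adversary fixes $g_1,\dots,g_T \in [-1,0]^N$ in advance. For a random variable $W$ with a continuous distribution and finite expectation, the stochastically smoothed potential is $\tilde\Phi(G) = \mathbb{E}[\max_{i}(G_i + W_i)]$ for $G\in\mathbb{R}^N$, $W_1,\dots,W_N$ i.i.d. copies of $W$; it is convex and differentiable, $\nabla_i\tilde\Phi(G) = \mathbb{P}(i = \arg\max_j (G_j+W_j))$. "Perturbation $\eta Z$" means $W=\eta Z$. GBPA$(\tilde\Phi)$: $\hat G_0 = 0$; for $t=1,\dots,T$: $p_t = \nabla\tilde\Phi(\hat G_{t-1})$, draw $i_t \sim p_t$, observe only $g_{t,i_t}$, set $\hat g_t = \frac{g_{t,i_t}}{p_{t,i_t}} e_{i_t}$, $\hat G_t = \hat G_{t-1} + \hat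 g_t$. Bregman divergence: $D_{\tilde\Phi}(x,y) = \tilde\Phi(x)-\tilde\Phi(y)-\langle\nabla\tilde\Phi(y), x-y\rangle$. *)

theory Defs
  imports "HOL-Probability.Probability"
begin

definition Zdist :: "(real \<Rightarrow> real) \<Rightarrow> real measure" where
  "Zdist f = density lborel (\<lambda>z. ennreal (f z))"

definition inv_cdf :: "(real \<Rightarrow> real) \<Rightarrow> real \<Rightarrow> real" where
  "inv_cdf f y = Inf {z. cdf (Zdist f) z = y}"

definition smoothed_pot :: "nat \<Rightarrow> real \<Rightarrow> (real \<Rightarrow> real) \<Rightarrow> (nat \<Rightarrow> real) \<Rightarrow> real" where
  "smoothed_pot N eta f G =
     integral\<^sup>L (PiM {..<N} (\<lambda>_. Zdist f)) (\<lambda>w. Max ((\<lambda>i. G i + eta * w i) ` {..<N}))"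

definition grad :: "nat \<Rightarrow> real \<Rightarrow> (real \<Rightarrow> real) \<Rightarrow> (nat \<Rightarrow> real) \<Rightarrow> nat \<Rightarrow> real" where
  "grad N eta f G i = deriv (\<lambda>x. smoothed_pot N eta f (G(i := x))) (G i)"

definition bregman :: "nat \<Rightarrow> real \<Rightarrow> (real \<Rightarrow> real) \<Rightarrow> (nat \<Rightarrow> real) \<Rightarrow> (nat \<Rightarrow> real) \<Rightarrow> real" where
  "bregman N eta f x y =
     smoothed_pot N eta f x - smoothed_pot N eta f y - (\<Sum>i<N. grad N eta f y i * (x i - y i))"

text \<open>GBPA cumulative gain estimate \<open>hat G_s\<close> along a history of drawn arms
  (hist s = arm i_s drawn in round s), for gains g s i = g_{s,i}.\<close>
fun gbpa_G :: "nat \<Rightarrow> real \<Rightarrow> (real \<Rightarrow> real) \<Rightarrow> (nat \<Rightarrow> nat \<Rightarrow> real) \<Rightarrow> (nat \<Rightarrow> nat)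
                 \<Rightarrow> nat \<Rightarrow> (nat \<Rightarrow> real)" where
  "gbpa_G N eta f g hist 0 = (\<lambda>_. 0)"
| "gbpa_G N eta f g hist (Suc s) =
     (let G = gbpa_G N eta f g hist s; i = hist (Suc s)
      in G(i := G i + g (Suc s) i / grad N eta f G i))"

end

theory Submission
  imports Defs
begin

text \<open>
  Only the coordinate \<open>i\<close> of the played arm moves, by \<open>r = g / p\<close> with \<open>p = \<nabla>\<^sub>i\<tilde>\<Phi>\<close>.
  Along one coordinate \<open>\<tilde>\<Phi>\<close> is the expectation of a hinge \<open>z \<mapsto> max (z + \<eta>Z\<^sub>i) M\<close>, whose
  Bregman gap between \<open>x\<close> and \<open>y\<close> is at most \<open>|y - x|\<close> and vanishes unless \<open>\<eta>Z\<^sub>i\<close> falls in an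
  interval of length \<open>|y - x|\<close>; since the density of \<open>Z\<close> is at most \<open>L\<close>, the divergence \<open>D\<close>
  is at most \<open>L r\<^sup>2 / \<eta>\<close>.  Convexity also gives \<open>D \<le> -p r \<le> 1\<close>, so \<open>(p D)\<^sup>2 \<le> L / \<eta>\<close> and
  \<open>p D \<le> L / (2 \<eta> \<epsilon>) + \<epsilon>\<close> by AM-GM.  Finally \<open>\<epsilon> \<le> L (1 - F\<^sup>-\<^sup>1(1 - \<epsilon>))\<close> because the
  mass \<open>\<epsilon>\<close> above \<open>F\<^sup>-\<^sup>1(1 - \<epsilon>)\<close> lies in an interval of length \<open>1 - F\<^sup>-\<^sup>1(1 - \<epsilon>)\<close>.
\<close>

lemma has_field_derivative_quadratic_remainder:
  fixes h :: "real \<Rightarrow> real"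
  assumes remainder: "\<And>y. \<bar>h y - h x - q * (y - x)\<bar> \<le> c * (y - x)\<^sup>2" and c: "0 \<le> c"
  shows "(h has_field_derivative q) (at x)"
  unfolding has_field_derivative_iff
proof (rule LIM_I)
  fix r :: real assume r: "0 < r"
  show "\<exists>s>0. \<forall>y. y \<noteq> x \<and> norm (y - x) < s \<longrightarrow> norm ((h y - h x) / (y - x) - q) < r"
  proof (intro exI[of _ "r / (c + 1)"] conjI allI impI)
    show "0 < r / (c + 1)" using r c by simp
    fix y assume y: "y \<noteq> x \<and> norm (y - x) < r / (c + 1)"
    have "(h y - h x) / (y - x) - q = (h y - h x - q * (y - x)) / (y - x)"
      using y by (simp add: field_simps)
    hence "\<bar>(h y - h x) / (y - x) - q\<bar> = \<bar>h y - h x - q * (y - x)\<bar> / \<bar>y - x\<bar>"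
      by (simp add: abs_divide)
    also have "\<dots> \<le> c * (y - x)\<^sup>2 / \<bar>y - x\<bar>"
      by (rule divide_right_mono[OF remainder]) simp
    also have "\<dots> = c * \<bar>y - x\<bar>"
    proof -
      have "\<bar>y - x\<bar> * \<bar>y - x\<bar> / \<bar>y - x\<bar> = \<bar>y - x\<bar>"
        by (rule nonzero_mult_div_cancel_right) (use y in simp)
      moreover have "(y - x)\<^sup>2 = \<bar>y - x\<bar> * \<bar>y - x\<bar>" by (simp add: power2_eq_square)
      ultimately show ?thesis by (metis times_divide_eq_right)
    qed
    also have "\<dots> \<le> c * (r / (c + 1))" using y c by (intro mult_left_mono) auto
    also have "\<dots> < r" using r c by (simp add: field_simps)
    finally show "norm ((h y - h x) / (y - x) - q) < r" by simp
  qed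
qed

lemma Max_image_diff_abs_le:
  fixes a b :: "'a \<Rightarrow> real"
  assumes "finite S" and "\<And>j. j \<in> S \<Longrightarrow> \<bar>a j - b j\<bar> \<le> B" and "0 \<le> B"
  shows "\<bar>Max (a ` S) - Max (b ` S)\<bar> \<le> B"
proof (cases "S = {}")
  case True thus ?thesis using assms(3) by simp
next
  case False
  have "Max (a ` S) \<in> a ` S" "Max (b ` S) \<in> b ` S" using assms(1) False by (intro Max_in; simp)+
  then obtain j1 j2 where j1: "j1 \<in> S" "Max (a ` S) = a j1" and j2: "j2 \<in> S" "Max (b ` S) = b j2"
    by blast
  have "b j1 \<le> Max (b ` S)" "a j2 \<le> Max (a ` S)" using j1(1) j2(1) assms(1) by (intro Max_ge; simp)+
  thus ?thesis using assms(2)[OF j1(1)] assms(2)[OF j2(1)] j1 j2 by (simp add: abs_le_iff)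
qed

lemma le_div_add_of_square_le:
  fixes u c e :: real
  assumes "0 \<le> u" "u\<^sup>2 \<le> c" "0 < e"
  shows "u \<le> c / (2 * e) + e"
proof -
  have "2 * e * u \<le> u\<^sup>2 + e\<^sup>2" using sum_squares_ge_zero[of "u - e" 0]
    by (simp add: power2_eq_square algebra_simps)
  moreover have "0 \<le> e\<^sup>2" by simp
  ultimately have "2 * e * u \<le> c + 2 * e\<^sup>2" using assms(2) by linarith
  thus ?thesis using assms(3) by (simp add: field_simps power2_eq_square)
qed

text \<open>The Bregman gap of the convex function \<open>z \<mapsto> max (z + a) m\<close> between \<open>y\<close> and \<open>x\<close>.\<close>
definition hinge_gap :: "real \<Rightarrow> real \<Rightarrow> real \<Rightarrow> real \<Rightarrow> real" where
  "hinge_gap x y a m = max (y + a) m - max (x + a) m - (if m \<le> x + a then y - x else 0)"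

lemma hinge_gap_nonneg: "0 \<le> hinge_gap x y a m"
  unfolding hinge_gap_def by (auto simp: max_def)

lemma hinge_gap_le:
  "hinge_gap x y a m \<le> \<bar>y - x\<bar> * indicator {min (m - x) (m - y) .. max (m - x) (m - y)} a"
  unfolding hinge_gap_def by (auto simp: max_def min_def abs_if indicator_def)

locale bounded_density =
  fixes f :: "real \<Rightarrow> real" and L :: real
  assumes f_meas: "f \<in> borel_measurable borel"
    and f_nonneg: "\<And>z. 0 \<le> f z"
    and f_le: "\<And>z. f z \<le> L"
    and prob_space_Zdist: "prob_space (Zdist f)"
begin

lemma L_nonneg: "0 \<le> L"
  using f_nonneg f_le by (meson order_trans)

lemma sets_Zdist: "sets (Zdist f) = sets borel"
  unfolding Zdist_def by simp

sublocale Z: real_distribution "Zdist f"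
  using prob_space_Zdist sets_Zdist by (simp add: real_distribution_def real_distribution_axioms_def)

lemma emeasure_Zdist_le:
  assumes "A \<in> sets borel"
  shows "emeasure (Zdist f) A \<le> ennreal L * emeasure lborel A"
proof -
  have "emeasure (Zdist f) A = (\<integral>\<^sup>+ x. ennreal (f x) * indicator A x \<partial>lborel)"
    unfolding Zdist_def using f_meas assms by (subst emeasure_density) auto
  also have "\<dots> \<le> (\<integral>\<^sup>+ x. ennreal L * indicator A x \<partial>lborel)"
    by (intro nn_integral_mono) (auto simp: indicator_def f_le intro: ennreal_leI)
  also have "\<dots> = ennreal L * emeasure lborel A"
    using assms by (simp add: nn_integral_cmult_indicator)
  finally show ?thesis .
qed

lemma measure_Zdist_le:
  assumes "A \<in> sets borel" "emeasure lborel A < \<infinity>"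
  shows "measure (Zdist f) A \<le> L * measure lborel A"
proof -
  have "emeasure (Zdist f) A \<le> ennreal L * emeasure lborel A" by (rule emeasure_Zdist_le[OF assms(1)])
  also have "\<dots> = ennreal (L * measure lborel A)"
    using assms(2) L_nonneg by (simp add: emeasure_eq_ennreal_measure ennreal_mult)
  finally have "enn2real (emeasure (Zdist f) A) \<le> enn2real (ennreal (L * measure lborel A))"
    by (intro enn2real_mono) auto
  thus ?thesis by (simp add: measure_def L_nonneg)
qed

lemma measure_Zdist_singleton: "measure (Zdist f) {x} = 0"
  using measure_Zdist_le[of "{x}"] by (simp add: antisym)

lemma continuous_cdf_Zdist: "continuous_on UNIV (cdf (Zdist f))"
  by (simp add: continuous_on_eq_continuous_at Z.isCont_cdf measure_Zdist_singleton)

context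
  assumes support: "emeasure (Zdist f) (- {0..1}) = 0"
begin

lemma measure_Zdist_outside: "measure (Zdist f) (- {0..1}) = 0"
  using support by (simp add: measure_def)

lemma cdf_Zdist_0: "cdf (Zdist f) 0 = 0"
proof -
  have "measure (Zdist f) {..0} \<le> measure (Zdist f) (- {0..1} \<union> {0})"
    by (intro Z.finite_measure_mono) auto
  also have "\<dots> \<le> measure (Zdist f) (- {0..1}) + measure (Zdist f) {0}"
    by (intro measure_subadditive) auto
  finally show ?thesis
    by (simp add: cdf_def measure_Zdist_outside measure_Zdist_singleton antisym)
qed

lemma cdf_Zdist_1: "cdf (Zdist f) 1 = 1"
proof -
  have "measure (Zdist f) {1<..} \<le> measure (Zdist f) (- {0..1})"
    by (intro Z.finite_measure_mono) auto
  hence "measure (Zdist f) {1<..} = 0" by (simp add: measure_Zdist_outside antisym)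
  moreover have "measure (Zdist f) {..1} = 1 - measure (Zdist f) {1<..}"
    using Z.prob_compl[of "{1<..}"] by (simp add: Compl_eq_Diff_UNIV[symmetric] not_less atMost_def)
  ultimately show ?thesis by (simp add: cdf_def)
qed

lemma inv_cdf_bound:
  assumes "0 < eps" "eps < 1"
  shows "eps \<le> L * (1 - inv_cdf f (1 - eps))"
proof -
  let ?F = "cdf (Zdist f)"
  obtain z where z: "0 \<le> z" "z \<le> 1" "?F z = 1 - eps"
    using IVT'[of ?F 0 "1 - eps" 1] cdf_Zdist_0 cdf_Zdist_1 assms continuous_cdf_Zdist
      continuous_on_subset by fastforce
  have "0 \<le> u" if "?F u = 1 - eps" for u
  proof (rule ccontr)
    assume "\<not> 0 \<le> u"
    hence "?F u \<le> ?F 0" by (intro Z.cdf_nondecreasing) auto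
    thus False using cdf_Zdist_0 that assms by simp
  qed
  hence "bdd_below {u. ?F u = 1 - eps}" by (intro bdd_belowI[of _ 0]) auto
  hence "inv_cdf f (1 - eps) \<le> z"
    unfolding inv_cdf_def using z(3) by (intro cInf_lower) auto
  moreover have "eps \<le> L * (1 - z)"
  proof (cases "z = 1")
    case True thus ?thesis using z cdf_Zdist_1 assms by simp
  next
    case False
    hence "z < 1" using z by simp
    have "eps = ?F 1 - ?F z" using z cdf_Zdist_1 by simp
    also have "\<dots> = measure (Zdist f) {z<..1}" using \<open>z < 1\<close> by (rule Z.cdf_diff_eq)
    also have "\<dots> \<le> L * measure lborel {z<..1}" by (rule measure_Zdist_le) (use \<open>z < 1\<close> in auto)
    finally show ?thesis using \<open>z < 1\<close> by simp
  qed
  ultimately show ?thesis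
    using mult_left_mono[of "1 - z" "1 - inv_cdf f (1 - eps)" L] L_nonneg by linarith
qed

end

lemma nn_integral_hinge_gap_le:
  assumes eta: "0 < eta"
  shows "(\<integral>\<^sup>+ z. ennreal (hinge_gap x y (eta * z) m) \<partial>Zdist f) \<le> ennreal (L / eta * (y - x)\<^sup>2)"
proof -
  define lo where "lo = min (m - x) (m - y) / eta"
  define hi where "hi = max (m - x) (m - y) / eta"
  have lohi: "lo \<le> hi" "hi - lo = \<bar>y - x\<bar> / eta" using eta
    by (auto simp: lo_def hi_def min_def max_def divide_simps abs_if)
  have window: "indicator {min (m - x) (m - y) .. max (m - x) (m - y)} (eta * z) = (indicator {lo..hi} z :: real)" for z
    using eta by (auto simp: lo_def hi_def pos_divide_le_eq pos_le_divide_eq mult.commute indicator_def)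
  have "(\<integral>\<^sup>+ z. ennreal (hinge_gap x y (eta * z) m) \<partial>Zdist f)
      = (\<integral>\<^sup>+ z. ennreal (f z * hinge_gap x y (eta * z) m) \<partial>lborel)"
    unfolding Zdist_def using f_meas f_nonneg hinge_gap_nonneg
    by (subst nn_integral_density) (auto simp: hinge_gap_def ennreal_mult)
  also have "\<dots> \<le> (\<integral>\<^sup>+ z. ennreal (L * \<bar>y - x\<bar>) * indicator {lo..hi} z \<partial>lborel)"
  proof (intro nn_integral_mono)
    fix z
    have "f z * hinge_gap x y (eta * z) m \<le> L * (\<bar>y - x\<bar> * indicator {lo..hi} z)"
      using hinge_gap_le[of x y "eta * z" m] hinge_gap_nonneg[of x y "eta * z" m] f_nonneg f_le L_nonneg
      unfolding window by (intro mult_mono) auto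
    thus "ennreal (f z * hinge_gap x y (eta * z) m) \<le> ennreal (L * \<bar>y - x\<bar>) * indicator {lo..hi} z"
      by (cases "z \<in> {lo..hi}") (auto intro: ennreal_leI simp: ennreal_neg)
  qed
  also have "\<dots> = ennreal (L * \<bar>y - x\<bar>) * ennreal (hi - lo)"
    using lohi by (simp add: nn_integral_cmult_indicator)
  also have "\<dots> = ennreal (L / eta * (y - x)\<^sup>2)"
    using lohi L_nonneg eta by (simp add: ennreal_mult[symmetric] power2_eq_square abs_mult_self_eq)
  finally show ?thesis .
qed

end

locale smoothed_potential = bounded_density +
  fixes N :: nat and eta :: real
  assumes eta_pos: "0 < eta"
begin

abbreviation noise :: "(nat \<Rightarrow> real) measure" where
  "noise \<equiv> PiM {..<N} (\<lambda>_. Zdist f)"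

definition pmax :: "(nat \<Rightarrow> real) \<Rightarrow> (nat \<Rightarrow> real) \<Rightarrow> real" where
  "pmax G w = Max ((\<lambda>j. G j + eta * w j) ` {..<N})"

definition lead_prob :: "(nat \<Rightarrow> real) \<Rightarrow> nat \<Rightarrow> real" where
  "lead_prob G i = (\<integral>w. (if pmax G w \<le> G i + eta * w i then 1 else 0) \<partial>noise)"

definition coord_gap :: "(nat \<Rightarrow> real) \<Rightarrow> nat \<Rightarrow> real \<Rightarrow> (nat \<Rightarrow> real) \<Rightarrow> real" where
  "coord_gap G i y w = pmax (G(i := y)) w - pmax G w
     - (y - G i) * (if pmax G w \<le> G i + eta * w i then 1 else 0)"

lemma smoothed_pot_eq: "smoothed_pot N eta f G = integral\<^sup>L noise (pmax G)"
  by (simp add: smoothed_pot_def pmax_def[abs_def])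

lemma prob_space_noise: "prob_space noise"
  by (rule prob_space_PiM) (use prob_space_Zdist in auto)

lemma component_measurable: "j < N \<Longrightarrow> (\<lambda>w. w j) \<in> borel_measurable noise"
  using measurable_component_singleton[of j "{..<N}" "\<lambda>_. Zdist f"]
  by (simp add: measurable_cong_sets[OF refl sets_Zdist])

lemma pmax_measurable: "pmax G \<in> borel_measurable noise"
proof -
  have "(\<lambda>w. Max ((\<lambda>j. G j + eta * w j) ` {..<N})) \<in> borel_measurable noise"
  proof (rule borel_measurable_Max)
    fix j assume "j \<in> {..<N}"
    thus "(\<lambda>w. G j + eta * w j) \<in> borel_measurable noise" using component_measurable[of j] by simp
  qed simp
  thus ?thesis by (simp add: pmax_def[abs_def])
qed

lemma integrable_pmax_transfer:
  assumes "integrable noise (pmax G)"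
  shows "integrable noise (pmax G')"
proof -
  interpret prob_space noise by (rule prob_space_noise)
  define B where "B = (\<Sum>j<N. \<bar>G' j - G j\<bar>)"
  have "\<bar>pmax G' w - pmax G w\<bar> \<le> B" for w
    unfolding pmax_def
  proof (rule Max_image_diff_abs_le)
    fix j assume "j \<in> {..<N}"
    thus "\<bar>(G' j + eta * w j) - (G j + eta * w j)\<bar> \<le> B"
      unfolding B_def using member_le_sum[of j "{..<N}" "\<lambda>j. \<bar>G' j - G j\<bar>"] by simp
  qed (simp_all add: B_def sum_nonneg)
  hence "integrable noise (\<lambda>w. pmax G' w - pmax G w)"
    by (intro integrable_const_bound[where B = B]) (auto intro!: borel_measurable_diff pmax_measurable)
  from Bochner_Integration.integrable_add[OF assms this] show ?thesis by simp
qed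

lemma pmax_fun_upd:
  assumes "i < N"
  shows "pmax (G(i := z)) w = Max (insert (z + eta * w i) ((\<lambda>j. G j + eta * w j) ` ({..<N} - {i})))"
proof -
  have "(\<lambda>j. (G(i := z)) j + eta * w j) ` {..<N}
      = insert (z + eta * w i) ((\<lambda>j. G j + eta * w j) ` ({..<N} - {i}))"
    using assms by (auto simp: image_iff) blast
  thus ?thesis unfolding pmax_def by (rule arg_cong[where f = Max])
qed

lemma coord_gap_eq:
  assumes "i < N"
  shows "coord_gap G i y w = (if {..<N} - {i} = {} then 0
           else hinge_gap (G i) y (eta * w i) (Max ((\<lambda>j. G j + eta * w j) ` ({..<N} - {i}))))"
proof -
  let ?others = "(\<lambda>j. G j + eta * w j) ` ({..<N} - {i})"
  have "pmax G w = pmax (G(i := G i)) w" by simp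
  hence pmax_G: "pmax G w = Max (insert (G i + eta * w i) ?others)"
    by (simp only: pmax_fun_upd[OF assms])
  show ?thesis
  proof (cases "{..<N} - {i} = {}")
    case True
    thus ?thesis unfolding coord_gap_def pmax_fun_upd[OF assms] pmax_G True by simp
  next
    case False
    have upd: "pmax (G(i := z)) w = max (z + eta * w i) (Max ?others)" for z
      unfolding pmax_fun_upd[OF assms] using False by (simp add: Max_insert)
    have pmax_G_max: "pmax G w = max (G i + eta * w i) (Max ?others)" using upd[of "G i"] by simp
    have gap_max: "max (y + a) M - max (G i + a) M - (y - G i) * (if max (G i + a) M \<le> G i + a then 1 else 0)
        = hinge_gap (G i) y a M" for a M
      unfolding hinge_gap_def by (auto simp: max_def)
    show ?thesis unfolding coord_gap_def upd pmax_G_max gap_max using False by simp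
  qed
qed

lemma coord_gap_nonneg: "i < N \<Longrightarrow> 0 \<le> coord_gap G i y w"
  by (simp add: coord_gap_eq hinge_gap_nonneg)

lemma coord_gap_measurable: "i < N \<Longrightarrow> coord_gap G i y \<in> borel_measurable noise"
  unfolding coord_gap_def[abs_def] using pmax_measurable component_measurable by measurable

lemma nn_integral_coord_gap_le:
  assumes i: "i < N"
  shows "(\<integral>\<^sup>+ w. ennreal (coord_gap G i y w) \<partial>noise) \<le> ennreal (L / eta * (y - G i)\<^sup>2)"
proof -
  define S where "S = {..<N} - {i}"
  have N_eq: "{..<N} = insert i S" and S: "finite S" "i \<notin> S" using i by (auto simp: S_def)
  interpret product_sigma_finite "\<lambda>_. Zdist f"
    unfolding product_sigma_finite_def using prob_space_imp_sigma_finite[OF prob_space_Zdist] by simp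
  interpret S: prob_space "PiM S (\<lambda>_. Zdist f)" by (rule prob_space_PiM) (use prob_space_Zdist in auto)
  txt \<open>Integrate out \<open>Z\<^sub>i\<close> first: the maximum of the other arms then stays fixed.\<close>
  have "(\<integral>\<^sup>+ w. ennreal (coord_gap G i y w) \<partial>noise)
      = (\<integral>\<^sup>+ u. (\<integral>\<^sup>+ z. ennreal (coord_gap G i y (u(i := z))) \<partial>Zdist f) \<partial>PiM S (\<lambda>_. Zdist f))"
    unfolding N_eq
    by (rule product_nn_integral_insert) (use S coord_gap_measurable[OF i] N_eq in auto)
  also have "\<dots> \<le> (\<integral>\<^sup>+ u. ennreal (L / eta * (y - G i)\<^sup>2) \<partial>PiM S (\<lambda>_. Zdist f))"
  proof (rule nn_integral_mono)
    fix u :: "nat \<Rightarrow> real"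
    define m where "m = Max ((\<lambda>j. G j + eta * u j) ` S)"
    have others: "(\<lambda>j. G j + eta * (u(i := z)) j) ` S = (\<lambda>j. G j + eta * u j) ` S" for z
      using S(2) by (auto intro!: image_cong)
    have "coord_gap G i y (u(i := z)) = (if S = {} then 0 else hinge_gap (G i) y (eta * z) m)" for z
      unfolding coord_gap_eq[OF i] S_def[symmetric] others m_def by simp
    thus "(\<integral>\<^sup>+ z. ennreal (coord_gap G i y (u(i := z))) \<partial>Zdist f) \<le> ennreal (L / eta * (y - G i)\<^sup>2)"
      using nn_integral_hinge_gap_le[OF eta_pos, of "G i" y m] by (cases "S = {}") simp_all
  qed
  also have "\<dots> = ennreal (L / eta * (y - G i)\<^sup>2)" by (simp add: S.emeasure_space_1)
  finally show ?thesis .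
qed

lemma lead_prob_nonneg: "0 \<le> lead_prob G i"
  unfolding lead_prob_def by (rule integral_nonneg_AE) simp

lemma bregman_fun_upd:
  assumes "i < N"
  shows "bregman N eta f (G(i := G i + r)) G
    = smoothed_pot N eta f (G(i := G i + r)) - smoothed_pot N eta f G - grad N eta f G i * r"
proof -
  have "(\<Sum>j<N. grad N eta f G j * ((G(i := G i + r)) j - G j)) = (\<Sum>j<N. if j = i then grad N eta f G i * r else 0)"
    by (rule sum.cong) auto
  thus ?thesis unfolding bregman_def using assms by simp
qed

context
  assumes integrable: "\<And>G. integrable noise (pmax G)"
begin

lemma integral_coord_gap:
  assumes "i < N"
  shows "integral\<^sup>L noise (coord_gap G i y)
    = smoothed_pot N eta f (G(i := y)) - smoothed_pot N eta f G - lead_prob G i * (y - G i)"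
proof -
  interpret prob_space noise by (rule prob_space_noise)
  have "(\<lambda>w. if pmax G w \<le> G i + eta * w i then 1 else 0 :: real) \<in> borel_measurable noise"
    using pmax_measurable component_measurable[OF assms] by measurable
  hence "integrable noise (\<lambda>w. if pmax G w \<le> G i + eta * w i then 1 else 0 :: real)"
    by (rule integrable_const_bound[where B = 1, rotated]) auto
  thus ?thesis
    unfolding coord_gap_def[abs_def] smoothed_pot_eq lead_prob_def using integrable by simp
qed

lemma smoothed_pot_coord_bounds:
  assumes i: "i < N"
  shows "0 \<le> smoothed_pot N eta f (G(i := y)) - smoothed_pot N eta f G - lead_prob G i * (y - G i)"
    and "smoothed_pot N eta f (G(i := y)) - smoothed_pot N eta f G - lead_prob G i * (y - G i)
         \<le> L / eta * (y - G i)\<^sup>2"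
proof -
  show "0 \<le> smoothed_pot N eta f (G(i := y)) - smoothed_pot N eta f G - lead_prob G i * (y - G i)"
    unfolding integral_coord_gap[OF i, symmetric]
    by (rule integral_nonneg_AE) (simp add: coord_gap_nonneg[OF i])
  have "integral\<^sup>L noise (coord_gap G i y) = enn2real (\<integral>\<^sup>+ w. ennreal (coord_gap G i y w) \<partial>noise)"
    by (rule integral_eq_nn_integral) (use coord_gap_measurable[OF i] coord_gap_nonneg[OF i] in auto)
  also have "\<dots> \<le> L / eta * (y - G i)\<^sup>2"
    using enn2real_mono[OF nn_integral_coord_gap_le[OF i]] L_nonneg eta_pos by simp
  finally show "smoothed_pot N eta f (G(i := y)) - smoothed_pot N eta f G - lead_prob G i * (y - G i)
      \<le> L / eta * (y - G i)\<^sup>2"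
    unfolding integral_coord_gap[OF i] .
qed

lemma grad_eq_lead_prob:
  assumes i: "i < N"
  shows "grad N eta f G i = lead_prob G i"
proof -
  have "((\<lambda>z. smoothed_pot N eta f (G(i := z))) has_field_derivative lead_prob G i) (at (G i))"
    using smoothed_pot_coord_bounds[OF i, of G] L_nonneg eta_pos
    by (intro has_field_derivative_quadratic_remainder[where c = "L / eta"]) (auto simp: abs_le_iff)
  thus ?thesis unfolding grad_def by (rule DERIV_imp_deriv)
qed

lemma lead_prob_bregman_step_le:
  assumes i: "i < N" and gain: "-1 \<le> gain" "gain \<le> 0" and p_pos: "0 < lead_prob G i" and e: "0 < e"
  shows "lead_prob G i * bregman N eta f (G(i := G i + gain / lead_prob G i)) G \<le> L / eta / (2 * e) + e"
proof -
  define p where "p = lead_prob G i"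
  define r where "r = gain / p"
  define G' where "G' = G(i := G i + r)"
  define D where "D = bregman N eta f G' G"
  have D_eq: "D = smoothed_pot N eta f G' - smoothed_pot N eta f G - p * r"
    unfolding D_def G'_def bregman_fun_upd[OF i] p_def grad_eq_lead_prob[OF i] ..
  have D_nonneg: "0 \<le> D" and D_quadratic: "D \<le> L / eta * r\<^sup>2"
    using smoothed_pot_coord_bounds[OF i, of G "G i + r"] unfolding D_eq G'_def p_def by simp_all
  have "r \<le> 0" unfolding r_def p_def using p_pos gain by (simp add: divide_nonpos_pos)
  hence "lead_prob G' i * (G i - G' i) \<ge> 0"
    using lead_prob_nonneg[of G' i] by (simp add: G'_def mult_nonneg_nonpos)
  moreover have "G'(i := G i) = G" by (simp add: G'_def)
  ultimately have "smoothed_pot N eta f G' \<le> smoothed_pot N eta f G"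
    using smoothed_pot_coord_bounds(1)[OF i, of G' "G i"] by simp
  hence D_le_1: "D \<le> 1" using p_pos gain by (simp add: D_eq r_def p_def)
  have "D * D \<le> L / eta * r\<^sup>2"
    using mult_mono[OF D_quadratic D_le_1 order_trans[OF D_nonneg D_quadratic] D_nonneg] by simp
  hence "(p * D)\<^sup>2 \<le> p\<^sup>2 * (L / eta * r\<^sup>2)"
    unfolding power_mult_distrib power2_eq_square[of D] by (rule mult_left_mono) simp
  also have "\<dots> = L / eta * gain\<^sup>2" using p_pos by (simp add: r_def p_def power_divide)
  also have "\<dots> \<le> L / eta"
    using mult_left_le[of "gain\<^sup>2" "L / eta"] L_nonneg eta_pos gain by (simp add: abs_square_le_1)
  finally have "p * D \<le> L / eta / (2 * e) + e"
    using p_pos D_nonneg e unfolding p_def by (intro le_div_add_of_square_le) auto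
  thus ?thesis unfolding D_def G'_def r_def p_def .
qed

end

lemma bregman_step_le:
  assumes i: "i < N" and gain: "-1 \<le> gain" "gain \<le> 0" and e: "0 < e"
  shows "grad N eta f G i * bregman N eta f (G(i := G i + gain / grad N eta f G i)) G \<le> L / eta / (2 * e) + e"
proof -
  have bound_nonneg: "0 \<le> L / eta / (2 * e) + e" using L_nonneg eta_pos e by simp
  show ?thesis
  proof (cases "\<forall>G. integrable noise (pmax G)")
    case False
    txt \<open>Then no \<open>pmax G\<close> is integrable, so the potential is the junk value \<open>0\<close> and so is its gradient.\<close>
    hence "\<not> integrable noise (pmax G')" for G' using integrable_pmax_transfer by blast
    hence "smoothed_pot N eta f G' = 0" for G' by (simp add: smoothed_pot_eq not_integrable_integral_eq)
    hence "grad N eta f G i = 0" unfolding grad_def by simp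
    thus ?thesis using bound_nonneg by simp
  next
    case True
    hence integrable: "\<And>G. integrable noise (pmax G)" by blast
    show ?thesis
    proof (cases "lead_prob G i = 0")
      case True thus ?thesis using bound_nonneg by (simp add: grad_eq_lead_prob[OF integrable i])
    next
      case False
      hence "0 < lead_prob G i" using lead_prob_nonneg[of G i] by simp
      thus ?thesis using lead_prob_bregman_step_le[OF integrable i gain _ e]
        by (simp add: grad_eq_lead_prob[OF integrable i])
    qed
  qed
qed

end

lemma gbpa_G_hist_cong:
  "(\<And>k. 1 \<le> k \<Longrightarrow> k \<le> s \<Longrightarrow> h1 k = h2 k) \<Longrightarrow> gbpa_G N eta f g h1 s = gbpa_G N eta f g h2 s"
  by (induction s) (simp_all add: Let_def)

theorem theorem1:
  fixes N T t :: nat and eta eps L :: real and f :: "real \<Rightarrow> real"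
    and g :: "nat \<Rightarrow> nat \<Rightarrow> real" and hist :: "nat \<Rightarrow> nat"
  assumes N_pos: "N \<ge> 1"
    and f_meas: "f \<in> borel_measurable borel"
    and f_nonneg: "\<forall>z. 0 \<le> f z"
    and f_bound: "\<forall>z. f z \<le> L"
    and Z_prob: "prob_space (Zdist f)"
    and Z_supp: "emeasure (Zdist f) (- {0..1}) = 0"
    and F_low: "Sup {z. cdf (Zdist f) z = 0} = 0"
    and F_up: "Inf {z. cdf (Zdist f) z = 1} = 1"
    and eta_pos: "eta > 0"
    and gains: "\<forall>s\<in>{1..T}. \<forall>i<N. -1 \<le> g s i \<and> g s i \<le> 0"
    and t_range: "1 \<le> t" "t \<le> T"
    and hist_arms: "\<forall>s\<in>{1..<t}. hist s < N"
    and hist_pos: "(\<Prod>s\<in>{1..<t}. grad N eta f (gbpa_G N eta f g hist (s - 1)) (hist s)) > 0"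
    and eps: "0 < eps" "eps < 1"
  shows "(\<Sum>i<N. grad N eta f (gbpa_G N eta f g hist (t - 1)) i *
            bregman N eta f (gbpa_G N eta f g (hist(t := i)) t) (gbpa_G N eta f g hist (t - 1)))
         \<le> real N * L * (1 / (2 * eta * eps) + 1 - inv_cdf f (1 - eps))"
proof -
  have "smoothed_potential f L eta"
    using f_meas f_nonneg f_bound Z_prob eta_pos
    by (simp add: smoothed_potential_def smoothed_potential_axioms_def bounded_density_def)
  then interpret smoothed_potential f L N eta .
  define G where "G = gbpa_G N eta f g hist (t - 1)"
  have step: "gbpa_G N eta f g (hist(t := i)) t = G(i := G i + g t i / grad N eta f G i)" for i
  proof -
    obtain s where t: "t = Suc s" using t_range by (cases t) auto
    have "gbpa_G N eta f g (hist(t := i)) s = gbpa_G N eta f g hist s"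
      by (rule gbpa_G_hist_cong) (simp add: t)
    thus ?thesis unfolding G_def t by (simp add: Let_def)
  qed
  have "grad N eta f G i * bregman N eta f (gbpa_G N eta f g (hist(t := i)) t) G
      \<le> L / eta / (2 * eps) + eps" if "i \<in> {..<N}" for i
    unfolding step by (rule bregman_step_le) (use gains t_range that eps in auto)
  hence "(\<Sum>i<N. grad N eta f G i * bregman N eta f (gbpa_G N eta f g (hist(t := i)) t) G)
      \<le> real (card {..<N}) * (L / eta / (2 * eps) + eps)"
    by (rule sum_bounded_above)
  also have "\<dots> \<le> real N * (L * (1 / (2 * eta * eps) + 1 - inv_cdf f (1 - eps)))"
  proof -
    have "L / eta / (2 * eps) = L * (1 / (2 * eta * eps))" by simp
    hence "L / eta / (2 * eps) + eps \<le> L * (1 / (2 * eta * eps) + 1 - inv_cdf f (1 - eps))"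
      using inv_cdf_bound[OF Z_supp eps] by (simp add: algebra_simps)
    thus ?thesis by (simp add: mult_left_mono)
  qed
  finally show ?thesis unfolding G_def by (simp add: mult.assoc)
qed

end
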